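(* Let $n_1,n_2,n_3\in\mathbb{N}$, let $\sigma$ be a segment label map on $G=\{1,\dots,n_1\}\times\{1,\dots,n_2\}\times\{1,\dots,n_3\}$, fix any decomposition of $T$ into blocks, and let $\tau'$ be the output of the block-wise method. For each block $B$ let $\mu_B$ denote the labeling of $B$ after Step 2 (i.e. $\lambda_B$ with offsets added, before label reconciliation). Then for each block $B$, any 1-cell $t_1\in B$ and any 2-cell $t_2\in\Gamma(t_1)$: $\mu_B(t_2)\neq\mu_B(s)$ for all $s\in\Gamma(t_1)\setminus\{t_2\}$ if and only if $\tau'(t_2)\neq\tau'(s)$ for all $s\in\Gamma(t_1)\setminus\{t_2\}$.
   Context: Voxel grid and segmentation: $G=\{1,\dots,n_1\}\times\{1,\dots,n_2\}\times\{1,\dots,n_3\}$; voxels $v,w$ are adjacent iff $\sum_i|v_i-w_i|=1$. A segment label map is $\sigma:G\to\mathbb{N}=\{1,2,\dots\}$ such that each level set $\sigma^{-1}(l)$ is connected w.r.t. this adjacency. Topological grid: $T=\{1,\dots,2n_1-1\}\times\{1,\dots,2n_2-1\}\times\{1,\dots,2n_3-1\}$; a cell with exactly $j$ odd coordinates is a $j$-cell. Voxel $r$ corresponds to the 3-cell $2r-1$. Two cells are 6-neighbors if they differ by $1$ in exactly one coordinate. For a $j$-cell $t$, $\Gamma(t)$ is the set of 6-neighbors of $t$ in $T$ that are $(j+1)$-cells. Cells $t_1,t_2$ are connected, $t_1\leftrightarrow t_2$, iff there is $t\in T$ with $t_1,t_2\in\Gamma(t)$. Procedure LABEL: for a voxel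 box $\prod_i\{a_i,\dots,b_i\}\subseteq G$ let $B=\prod_i\{2a_i-1,\dots,2b_i-1\}$ be its cell box (for non-3-cells $t\in B$, $\Gamma(t)\subseteq B$). $\mathrm{LABEL}(\sigma,B)$ produces $\lambda:B\to\mathbb{N}_0$: (1) $\lambda(2r-1)=\sigma(r)$ for 3-cells. (2) For $j=2,1,0$ in this order: for each $j$-cell $t\in B$ let $\theta(t)$ be the set of positive integers occurring exactly once in $(\lambda(s))_{s\in\Gamma(t)}$; $t$ is active iff $\theta(t)\ne\emptyset$, inactive $j$-cells get label $0$; the active $j$-cells of $B$ are partitioned into maximal sets of cells with equal $\theta$ that are connected by $\leftrightarrow$-paths inside the set; these classes are numbered $1,\dots,m_j(B)$ arbitrarily and each active $j$-cell gets its class number. Block-wise method: for each axis $i$ choose odd integers $1=a^i_0<\dots<a^i_{m_i}=2n_i-1$; blocks are the boxes $\prod_i\{a^i_{k_i-1},\dots,a^i_{k_i}\}$. Step 1: $\lambda_B=\mathrm{LABEL}(\sigma,B)$ for each block. Step 2: with blocks ordered $B_1,\dots,B_K$, add offset $\sum_{k'<k}m_j(B_{k'})$ to each positive $j$-cell label of $\lambda_{B_k}$ ($j\in\{0,1,2\}$). Step 3: for $j\in\{1,2\}$, via union–find, unite the labels received in different blocks by any active $j$-cell lying in several blocks, and replace every positive $j$-cell label by its set representative. Step 4: for each 0-cell $t_0$ and each pair of distinct 1-cell labels occurring exactly once among the current labels of $\Gamma(t_0)$, merge the two labels if the corresponding 1-cells bound the same set of current 2-cell labels; if any merge took place at $t_0$,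 recompute the activity of $t_0$ and set its label to $0$ if inactive. The result is $\tau':T\to\mathbb{N}_0$. *)

theory Defs
  imports Main
begin

type_synonym cell = "int \<times> int \<times> int"

definition l1dist :: "cell \<Rightarrow> cell \<Rightarrow> int" where
  "l1dist v w = (case v of (x,y,z) \<Rightarrow> case w of (x',y',z') \<Rightarrow>
      \<bar>x - x'\<bar> + \<bar>y - y'\<bar> + \<bar>z - z'\<bar>)"

definition vgrid :: "nat \<Rightarrow> nat \<Rightarrow> nat \<Rightarrow> cell set" where
  "vgrid n1 n2 n3 = {(x,y,z). 1 \<le> x \<and> x \<le> int n1 \<and> 1 \<le> y \<and> y \<le> int n2 \<and> 1 \<le> z \<and> z \<le> int n3}"

definition vadj :: "cell \<Rightarrow> cell \<Rightarrow> bool" where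
  "vadj v w \<longleftrightarrow> l1dist v w = 1"

definition seg_label_map :: "nat \<Rightarrow> nat \<Rightarrow> nat \<Rightarrow> (cell \<Rightarrow> nat) \<Rightarrow> bool" where
  "seg_label_map n1 n2 n3 \<sigma> \<longleftrightarrow>
     (\<forall>v\<in>vgrid n1 n2 n3. \<sigma> v \<ge> 1) \<and>
     (\<forall>l. \<forall>v\<in>vgrid n1 n2 n3. \<forall>w\<in>vgrid n1 n2 n3. \<sigma> v = l \<and> \<sigma> w = l \<longrightarrow>
        (v, w) \<in> {(a, b). a \<in> vgrid n1 n2 n3 \<and> b \<in> vgrid n1 n2 n3 \<and> \<sigma> a = l \<and> \<sigma> b = l \<and> vadj a b}\<^sup>*)"

definition tgrid :: "nat \<Rightarrow> nat \<Rightarrow> nat \<Rightarrow> cell set" where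
  "tgrid n1 n2 n3 = {(x,y,z). 1 \<le> x \<and> x \<le> 2 * int n1 - 1 \<and> 1 \<le> y \<and> y \<le> 2 * int n2 - 1
                        \<and> 1 \<le> z \<and> z \<le> 2 * int n3 - 1}"

definition cdim :: "cell \<Rightarrow> nat" where
  "cdim t = (case t of (x,y,z) \<Rightarrow>
      (if odd x then 1 else 0) + (if odd y then 1 else 0) + (if odd z then 1 else 0))"

definition nbr6 :: "cell \<Rightarrow> cell \<Rightarrow> bool" where
  "nbr6 t s \<longleftrightarrow> l1dist t s = 1"

definition Gam :: "cell set \<Rightarrow> cell \<Rightarrow> cell set" where
  "Gam T t = {s \<in> T. nbr6 t s \<and> cdim s = cdim t + 1}"

definition conn :: "cell set \<Rightarrow> cell \<Rightarrow> cell \<Rightarrow> bool" where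
  "conn T t1 t2 \<longleftrightarrow> (\<exists>t\<in>T. t1 \<in> Gam T t \<and> t2 \<in> Gam T t)"

text \<open>Voxel corresponding to a 3-cell: 2r-1 = t.\<close>
definition vox_of :: "cell \<Rightarrow> cell" where
  "vox_of t = (case t of (x,y,z) \<Rightarrow> ((x + 1) div 2, (y + 1) div 2, (z + 1) div 2))"

definition theta :: "cell set \<Rightarrow> (cell \<Rightarrow> nat) \<Rightarrow> cell \<Rightarrow> nat set" where
  "theta T lam t = {l. l > 0 \<and> card {s \<in> Gam T t. lam s = l} = 1}"

definition classrel :: "cell set \<Rightarrow> (cell \<Rightarrow> nat) \<Rightarrow> cell set \<Rightarrow> nat \<Rightarrow> (cell \<times> cell) set" where
  "classrel T lam B j = {(u, v). u \<in> B \<and> v \<in> B \<and> cdim u = j \<and> cdim v = j \<and>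
      theta T lam u \<noteq> {} \<and> theta T lam u = theta T lam v \<and> conn T u v}"

text \<open>lam (restricted to B) together with the class counts m j is a possible
  output of LABEL(sigma, B) (the numbering of classes being arbitrary).\<close>
definition is_LABEL :: "cell set \<Rightarrow> (cell \<Rightarrow> nat) \<Rightarrow> cell set \<Rightarrow> (cell \<Rightarrow> nat) \<Rightarrow> (nat \<Rightarrow> nat) \<Rightarrow> bool" where
  "is_LABEL T \<sigma> B lam m \<longleftrightarrow>
     (\<forall>t\<in>B. cdim t = 3 \<longrightarrow> lam t = \<sigma> (vox_of t)) \<and>
     (\<forall>j\<in>{0,1,2}.
        (\<forall>t\<in>B. cdim t = j \<and> theta T lam t = {} \<longrightarrow> lam t = 0) \<and>
        lam ` {t \<in> B. cdim t = j \<and> theta T lam t \<noteq> {}} = {1..m j} \<and>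
        (\<forall>t\<in>B. \<forall>t'\<in>B. cdim t = j \<and> cdim t' = j \<and> theta T lam t \<noteq> {} \<and> theta T lam t' \<noteq> {} \<longrightarrow>
            (lam t = lam t' \<longleftrightarrow> (t, t') \<in> (classrel T lam B j)\<^sup>*)))"

definition valid_cuts :: "nat \<Rightarrow> int list \<Rightarrow> bool" where
  "valid_cuts n a \<longleftrightarrow> a \<noteq> [] \<and> sorted_wrt (<) a \<and> hd a = 1 \<and> last a = 2 * int n - 1 \<and>
     (\<forall>x\<in>set a. odd x)"

definition axis_intervals :: "int list \<Rightarrow> int set list" where
  "axis_intervals a = map (\<lambda>k. {a ! (k - 1) .. a ! k}) [1..<length a]"

definition blocks :: "int list \<Rightarrow> int list \<Rightarrow> int list \<Rightarrow> cell set set" where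
  "blocks a1 a2 a3 = {I1 \<times> I2 \<times> I3 | I1 I2 I3.
      I1 \<in> set (axis_intervals a1) \<and> I2 \<in> set (axis_intervals a2) \<and> I3 \<in> set (axis_intervals a3)}"

definition offset :: "cell set list \<Rightarrow> (cell set \<Rightarrow> nat \<Rightarrow> nat) \<Rightarrow> nat \<Rightarrow> nat \<Rightarrow> nat" where
  "offset Bs m k j = (\<Sum>i<k. m (Bs ! i) j)"

definition mu :: "cell set list \<Rightarrow> (cell set \<Rightarrow> cell \<Rightarrow> nat) \<Rightarrow> (cell set \<Rightarrow> nat \<Rightarrow> nat)
                   \<Rightarrow> nat \<Rightarrow> cell \<Rightarrow> nat" where
  "mu Bs lam m k t =
     (if cdim t \<in> {0,1,2} \<and> lam (Bs ! k) t > 0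
      then lam (Bs ! k) t + offset Bs m k (cdim t) else lam (Bs ! k) t)"

definition unite_pairs :: "cell set list \<Rightarrow> (cell set \<Rightarrow> cell \<Rightarrow> nat) \<Rightarrow> (cell set \<Rightarrow> nat \<Rightarrow> nat)
                            \<Rightarrow> nat \<Rightarrow> (nat \<times> nat) set" where
  "unite_pairs Bs lam m j = {(mu Bs lam m k t, mu Bs lam m k' t) | k k' t.
      k < length Bs \<and> k' < length Bs \<and> k \<noteq> k' \<and> t \<in> Bs ! k \<and> t \<in> Bs ! k' \<and> cdim t = j \<and>
      mu Bs lam m k t > 0 \<and> mu Bs lam m k' t > 0}"

text \<open>rep j is a choice of set representatives of the union-find partition
  for j-cell labels.\<close>
definition is_rep :: "cell set list \<Rightarrow> (cell set \<Rightarrow> cell \<Rightarrow> nat) \<Rightarrow> (cell set \<Rightarrow> nat \<Rightarrow> nat)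
                       \<Rightarrow> nat \<Rightarrow> (nat \<Rightarrow> nat) \<Rightarrow> bool" where
  "is_rep Bs lam m j r \<longleftrightarrow>
     (\<forall>l. (l, r l) \<in> (unite_pairs Bs lam m j)\<^sup>*) \<and>
     (\<forall>l l'. (l, l') \<in> (unite_pairs Bs lam m j)\<^sup>* \<longrightarrow> r l = r l')"

end

theory Submission
  imports Defs
begin

text \<open>
  The 3-cells bounding a 2-cell are voxels, so its \<open>\<theta>\<close> is computed from \<open>\<sigma>\<close> alone and does
  not depend on the block. After the offsets of Step 2 a positive 2-cell label determines its
  block, hence its LABEL class, hence its \<open>\<theta>\<close>; Step 3 only unites labels carried by a common
  cell, so all labels of one union--find class carry the same \<open>\<theta>\<close>, while label 0 is never
  united. Two 2-cells with distinct \<open>\<mu>\<^sub>B\<close>-labels bounding a common 1-cell of \<open>B\<close> are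
  \<open>\<leftrightarrow>\<close>-connected through it, so if both were active with equal \<open>\<theta>\<close> LABEL would have put
  them in one class; hence they stay apart after Step 3.
\<close>

lemma nonneg_sum3_eq_1_cases:
  fixes a b c :: int
  assumes "a + b + c = 1" "0 \<le> a" "0 \<le> b" "0 \<le> c"
  shows "a = 1 \<and> b = 0 \<and> c = 0 \<or> a = 0 \<and> b = 1 \<and> c = 0 \<or> a = 0 \<and> b = 0 \<and> c = 1"
  using assms by linarith

lemma Gam_changes_one_even_coordinate:
  assumes "(x', y', z') \<in> Gam T (x, y, z)"
  shows "(even x \<and> \<bar>x - x'\<bar> = 1 \<and> y' = y \<and> z' = z) \<or>
         (x' = x \<and> even y \<and> \<bar>y - y'\<bar> = 1 \<and> z' = z) \<or>
         (x' = x \<and> y' = y \<and> even z \<and> \<bar>z - z'\<bar> = 1)"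
proof -
  have dist: "\<bar>x - x'\<bar> + \<bar>y - y'\<bar> + \<bar>z - z'\<bar> = 1"
    using assms by (simp add: Gam_def nbr6_def l1dist_def)
  have dim: "of_bool (odd x') + of_bool (odd y') + of_bool (odd z')
       = of_bool (odd x) + of_bool (odd y) + of_bool (odd z) + (1::nat)"
    using assms by (simp add: Gam_def cdim_def of_bool_def)
  have dim_step: "even a" if "of_bool (odd a') = of_bool (odd a) + (1::nat)" for a a' :: int
    using that by (auto simp: of_bool_def split: if_splits)
  from nonneg_sum3_eq_1_cases[OF dist abs_ge_zero abs_ge_zero abs_ge_zero] show ?thesis
  proof (elim disjE conjE)
    assume "\<bar>x - x'\<bar> = 1" "\<bar>y - y'\<bar> = 0" "\<bar>z - z'\<bar> = 0"
    then show ?thesis using dim_step[of x' x] dim by simp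
  next
    assume "\<bar>x - x'\<bar> = 0" "\<bar>y - y'\<bar> = 1" "\<bar>z - z'\<bar> = 0"
    then show ?thesis using dim_step[of y' y] dim by simp
  next
    assume "\<bar>x - x'\<bar> = 0" "\<bar>y - y'\<bar> = 0" "\<bar>z - z'\<bar> = 1"
    then show ?thesis using dim_step[of z' z] dim by simp
  qed
qed

lemma even_step_in_odd_interval:
  fixes x x' p q :: int
  assumes "even x" "odd p" "odd q" "p \<le> x" "x \<le> q" "\<bar>x - x'\<bar> = 1"
  shows "p \<le> x' \<and> x' \<le> q"
  using assms by presburger

lemma odd_box_closed_under_Gam:
  assumes "odd p1" "odd q1" "odd p2" "odd q2" "odd p3" "odd q3"
    and "t \<in> {p1..q1} \<times> {p2..q2} \<times> {p3..q3}"
  shows "Gam T t \<subseteq> {p1..q1} \<times> {p2..q2} \<times> {p3..q3}"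
proof
  fix s assume "s \<in> Gam T t"
  moreover obtain x y z x' y' z' where "t = (x, y, z)" "s = (x', y', z')"
    by (cases t, cases s) auto
  ultimately show "s \<in> {p1..q1} \<times> {p2..q2} \<times> {p3..q3}"
    using Gam_changes_one_even_coordinate[of x' y' z' T x y z] assms
    by (auto dest: even_step_in_odd_interval)
qed

lemma axis_intervals_odd_bounds:
  assumes "valid_cuts n a" and "I \<in> set (axis_intervals a)"
  obtains p q where "I = {p..q}" "odd p" "odd q" "1 \<le> p" "q \<le> 2 * int n - 1"
proof -
  from assms(2) obtain k where k: "1 \<le> k" "k < length a" "I = {a ! (k - 1) .. a ! k}"
    unfolding axis_intervals_def by auto
  have "a \<noteq> []" and sorted: "sorted_wrt (<) a" and "hd a = 1" and "last a = 2 * int n - 1"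
    and odd: "\<forall>x\<in>set a. odd x"
    using assms(1) unfolding valid_cuts_def by auto
  then have first: "a ! 0 = 1" and last: "a ! (length a - 1) = 2 * int n - 1"
    by (simp_all add: hd_conv_nth last_conv_nth)
  have mono: "a ! i \<le> a ! j" if "i \<le> j" "j < length a" for i j
    using sorted_wrt_nth_less[OF sorted, of i j] that by (cases "i = j") auto
  show thesis
  proof
    show "1 \<le> a ! (k - 1)" using mono[of 0 "k - 1"] k first by simp
    show "a ! k \<le> 2 * int n - 1" using mono[of k "length a - 1"] k last by simp
    show "odd (a ! (k - 1))" "odd (a ! k)" using odd k by auto
  qed (use k in simp)
qed

lemma blocks_odd_box:
  assumes "valid_cuts n1 a1" "valid_cuts n2 a2" "valid_cuts n3 a3"
    and "B \<in> blocks a1 a2 a3"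
  obtains p1 q1 p2 q2 p3 q3 where "B = {p1..q1} \<times> {p2..q2} \<times> {p3..q3}"
    "odd p1" "odd q1" "odd p2" "odd q2" "odd p3" "odd q3" "B \<subseteq> tgrid n1 n2 n3"
proof -
  from assms(4) obtain I1 I2 I3 where B: "B = I1 \<times> I2 \<times> I3" and
    "I1 \<in> set (axis_intervals a1)" "I2 \<in> set (axis_intervals a2)" "I3 \<in> set (axis_intervals a3)"
    unfolding blocks_def by blast
  obtain p1 q1 where "I1 = {p1..q1}" "odd p1" "odd q1" "1 \<le> p1" "q1 \<le> 2 * int n1 - 1"
    using axis_intervals_odd_bounds[OF assms(1) \<open>I1 \<in> _\<close>] by blast
  moreover obtain p2 q2 where "I2 = {p2..q2}" "odd p2" "odd q2" "1 \<le> p2" "q2 \<le> 2 * int n2 - 1"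
    using axis_intervals_odd_bounds[OF assms(2) \<open>I2 \<in> _\<close>] by blast
  moreover obtain p3 q3 where "I3 = {p3..q3}" "odd p3" "odd q3" "1 \<le> p3" "q3 \<le> 2 * int n3 - 1"
    using axis_intervals_odd_bounds[OF assms(3) \<open>I3 \<in> _\<close>] by blast
  ultimately show thesis
    using B by (intro that[of p1 q1 p2 q2 p3 q3]) (auto simp: tgrid_def)
qed

lemma Gam_subset_of_block:
  assumes "valid_cuts n1 a1" "valid_cuts n2 a2" "valid_cuts n3 a3"
    and "B \<in> blocks a1 a2 a3" "t \<in> B"
  shows "Gam T t \<subseteq> B"
proof (rule blocks_odd_box[OF assms(1-4)])
  fix p1 q1 p2 q2 p3 q3
  assume "B = {p1..q1} \<times> {p2..q2} \<times> {p3..q3}"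
    and "odd p1" "odd q1" "odd p2" "odd q2" "odd p3" "odd q3"
  then show "Gam T t \<subseteq> B" using odd_box_closed_under_Gam assms(5) by simp
qed

lemma block_subset_tgrid:
  assumes "valid_cuts n1 a1" "valid_cuts n2 a2" "valid_cuts n3 a3"
    and "B \<in> blocks a1 a2 a3"
  shows "B \<subseteq> tgrid n1 n2 n3"
  by (rule blocks_odd_box[OF assms])

lemma is_LABEL_inactive_zero:
  assumes "is_LABEL T \<sigma> B lam m" "j \<in> {0, 1, 2}" "t \<in> B" "cdim t = j" "theta T lam t = {}"
  shows "lam t = 0"
  using assms unfolding is_LABEL_def by blast

lemma is_LABEL_active_range:
  assumes "is_LABEL T \<sigma> B lam m" "j \<in> {0, 1, 2}" "t \<in> B" "cdim t = j" "theta T lam t \<noteq> {}"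
  shows "lam t \<in> {1..m j}"
proof -
  have "lam ` {t \<in> B. cdim t = j \<and> theta T lam t \<noteq> {}} = {1..m j}"
    using assms(1,2) unfolding is_LABEL_def by blast
  then show ?thesis using assms(3-5) by blast
qed

lemma is_LABEL_pos_iff_active:
  assumes "is_LABEL T \<sigma> B lam m" "j \<in> {0, 1, 2}" "t \<in> B" "cdim t = j"
  shows "0 < lam t \<longleftrightarrow> theta T lam t \<noteq> {}"
  using is_LABEL_inactive_zero[OF assms] is_LABEL_active_range[OF assms] by force

lemma is_LABEL_pos_le:
  assumes "is_LABEL T \<sigma> B lam m" "j \<in> {0, 1, 2}" "t \<in> B" "cdim t = j" "0 < lam t"
  shows "lam t \<le> m j"
  using is_LABEL_active_range[OF assms(1-4)] is_LABEL_pos_iff_active[OF assms(1-4)] assms(5)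
  by simp

lemma is_LABEL_eq_iff_classrel:
  assumes "is_LABEL T \<sigma> B lam m" "j \<in> {0, 1, 2}" "t \<in> B" "t' \<in> B" "cdim t = j" "cdim t' = j"
    and "0 < lam t" "0 < lam t'"
  shows "lam t = lam t' \<longleftrightarrow> (t, t') \<in> (classrel T lam B j)\<^sup>*"
proof -
  have "theta T lam t \<noteq> {}" "theta T lam t' \<noteq> {}"
    using is_LABEL_pos_iff_active[OF assms(1,2)] assms(3-8) by blast+
  moreover have "\<forall>t\<in>B. \<forall>t'\<in>B. cdim t = j \<and> cdim t' = j \<and> theta T lam t \<noteq> {} \<and> theta T lam t' \<noteq> {} \<longrightarrow>
      (lam t = lam t' \<longleftrightarrow> (t, t') \<in> (classrel T lam B j)\<^sup>*)"
    using assms(1,2) unfolding is_LABEL_def by blast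
  ultimately show ?thesis using assms(3-6) by blast
qed

lemma classrel_rtrancl_theta_eq:
  "(u, v) \<in> (classrel T lam B j)\<^sup>* \<Longrightarrow> theta T lam u = theta T lam v"
  by (induct rule: rtrancl_induct) (auto simp: classrel_def)

lemma theta_cong:
  assumes "\<And>s. s \<in> Gam T t \<Longrightarrow> f s = g s"
  shows "theta T f t = theta T g t"
proof -
  have "{s \<in> Gam T t. f s = l} = {s \<in> Gam T t. g s = l}" for l
    using assms by auto
  then show ?thesis by (simp add: theta_def)
qed

lemma is_LABEL_theta_2cell:
  assumes "is_LABEL T \<sigma> B lam m" "Gam T t \<subseteq> B" "cdim t = 2"
  shows "theta T lam t = theta T (\<sigma> \<circ> vox_of) t"
proof (rule theta_cong)
  fix s assume "s \<in> Gam T t"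
  then have "s \<in> B" "cdim s = 3" using assms(2,3) by (auto simp: Gam_def)
  then show "lam s = (\<sigma> \<circ> vox_of) s" using assms(1) by (simp add: is_LABEL_def)
qed

lemma mu_pos_iff: "0 < mu Bs lam m k t \<longleftrightarrow> 0 < lam (Bs ! k) t"
  by (simp add: mu_def)

lemma mu_eq_imp_lam_eq:
  assumes "cdim t = j" "cdim t' = j" "j \<in> {0, 1, 2}" "mu Bs lam m k t = mu Bs lam m k t'"
  shows "lam (Bs ! k) t = lam (Bs ! k) t'"
  using assms by (auto simp: mu_def split: if_splits)

lemma offset_Suc: "offset Bs m (Suc k) j = offset Bs m k j + m (Bs ! k) j"
  by (simp add: offset_def)

lemma offset_Suc_le: "k < k' \<Longrightarrow> offset Bs m (Suc k) j \<le> offset Bs m k' j"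
  unfolding offset_def by (intro sum_mono2) auto

lemma offset_intervals_disjoint:
  assumes "offset Bs m k j < L" "L \<le> offset Bs m (Suc k) j"
    and "offset Bs m k' j < L" "L \<le> offset Bs m (Suc k') j"
  shows "k = k'"
proof (rule ccontr)
  assume "k \<noteq> k'"
  then consider "k < k'" | "k' < k" by linarith
  then show False
  proof cases
    case 1
    then have "offset Bs m (Suc k) j \<le> offset Bs m k' j" by (rule offset_Suc_le)
    with assms show False by linarith
  next
    case 2
    then have "offset Bs m (Suc k') j \<le> offset Bs m k j" by (rule offset_Suc_le)
    with assms show False by linarith
  qed
qed

lemma mu_in_offset_interval:
  assumes "cdim t = j" "j \<in> {0, 1, 2}" "0 < lam (Bs ! k) t" "lam (Bs ! k) t \<le> m (Bs ! k) j"
  shows "offset Bs m k j < mu Bs lam m k t \<and> mu Bs lam m k t \<le> offset Bs m (Suc k) j"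
  using assms by (auto simp: mu_def offset_Suc)

lemma rtrancl_preserves_key:
  assumes "(L, L') \<in> U\<^sup>*" "K L X"
    and "\<And>L L'. (L, L') \<in> U \<Longrightarrow> \<exists>X. K L X \<and> K L' X"
    and "\<And>L X Y. K L X \<Longrightarrow> K L Y \<Longrightarrow> X = Y"
  shows "K L' X"
  using assms(1,2)
proof induct
  case (step L' L'')
  then obtain Y where "K L' Y" "K L'' Y" using assms(3) by blast
  with step assms(4) show ?case by blast
qed

locale block_labeling =
  fixes T :: "cell set" and \<sigma> :: "cell \<Rightarrow> nat" and Bs :: "cell set list"
    and lam :: "cell set \<Rightarrow> cell \<Rightarrow> nat" and m :: "cell set \<Rightarrow> nat \<Rightarrow> nat"
  assumes blocks_in_grid: "k < length Bs \<Longrightarrow> Bs ! k \<subseteq> T"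
    and blocks_closed_Gam: "k < length Bs \<Longrightarrow> t \<in> Bs ! k \<Longrightarrow> Gam T t \<subseteq> Bs ! k"
    and blocks_labeled: "k < length Bs \<Longrightarrow> is_LABEL T \<sigma> (Bs ! k) (lam (Bs ! k)) (m (Bs ! k))"
begin

abbreviation vox_theta :: "cell \<Rightarrow> nat set" where
  "vox_theta \<equiv> theta T (\<sigma> \<circ> vox_of)"

lemma theta_2cell:
  "k < length Bs \<Longrightarrow> t \<in> Bs ! k \<Longrightarrow> cdim t = 2 \<Longrightarrow> theta T (lam (Bs ! k)) t = vox_theta t"
  using is_LABEL_theta_2cell blocks_labeled blocks_closed_Gam by metis

lemma mu_eq_imp_same_block:
  assumes "k < length Bs" "k' < length Bs" "t \<in> Bs ! k" "t' \<in> Bs ! k'" "cdim t = 2" "cdim t' = 2"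
    and "0 < mu Bs lam m k t" "mu Bs lam m k t = mu Bs lam m k' t'"
  shows "k = k'"
proof -
  have pos: "0 < lam (Bs ! k) t" "0 < lam (Bs ! k') t'"
    using assms(7,8) mu_pos_iff by metis+
  have "offset Bs m k 2 < mu Bs lam m k t \<and> mu Bs lam m k t \<le> offset Bs m (Suc k) 2"
    using is_LABEL_pos_le[OF blocks_labeled[OF assms(1)] _ assms(3,5) pos(1)] assms(5) pos(1)
    by (intro mu_in_offset_interval) auto
  moreover have "offset Bs m k' 2 < mu Bs lam m k' t' \<and> mu Bs lam m k' t' \<le> offset Bs m (Suc k') 2"
    using is_LABEL_pos_le[OF blocks_labeled[OF assms(2)] _ assms(4,6) pos(2)] assms(6) pos(2)
    by (intro mu_in_offset_interval) auto
  ultimately show ?thesis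
    using offset_intervals_disjoint assms(8) by metis
qed

lemma mu_eq_imp_vox_theta_eq:
  assumes "k < length Bs" "k' < length Bs" "t \<in> Bs ! k" "t' \<in> Bs ! k'" "cdim t = 2" "cdim t' = 2"
    and "0 < mu Bs lam m k t" "mu Bs lam m k t = mu Bs lam m k' t'"
  shows "vox_theta t = vox_theta t'"
proof -
  have "k' = k" using mu_eq_imp_same_block[OF assms] by simp
  note labeled = blocks_labeled[OF assms(1)]
  have pos: "0 < lam (Bs ! k) t" "0 < lam (Bs ! k) t'"
    using assms(7,8) \<open>k' = k\<close> mu_pos_iff by metis+
  have "lam (Bs ! k) t = lam (Bs ! k) t'"
    using mu_eq_imp_lam_eq assms(5,6,8) \<open>k' = k\<close> by (metis insert_iff)
  then have "(t, t') \<in> (classrel T (lam (Bs ! k)) (Bs ! k) 2)\<^sup>*"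
    using is_LABEL_eq_iff_classrel[OF labeled _ assms(3) _ assms(5,6) pos] assms(4) \<open>k' = k\<close>
    by simp
  then show ?thesis
    using classrel_rtrancl_theta_eq theta_2cell assms(1-6) \<open>k' = k\<close> by metis
qed

lemma conn_vox_theta_eq_imp_mu_eq:
  assumes "k < length Bs" "t \<in> Bs ! k" "t' \<in> Bs ! k" "cdim t = 2" "cdim t' = 2"
    and "conn T t t'" "0 < mu Bs lam m k t" "0 < mu Bs lam m k t'" "vox_theta t = vox_theta t'"
  shows "mu Bs lam m k t = mu Bs lam m k t'"
proof -
  note labeled = blocks_labeled[OF assms(1)]
  have pos: "0 < lam (Bs ! k) t" "0 < lam (Bs ! k) t'"
    using assms(7,8) mu_pos_iff by blast+
  have "theta T (lam (Bs ! k)) t \<noteq> {}"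
    using is_LABEL_pos_iff_active[OF labeled _ assms(2,4)] pos by simp
  moreover have "theta T (lam (Bs ! k)) t = theta T (lam (Bs ! k)) t'"
    using theta_2cell assms(1-5,9) by metis
  ultimately have "(t, t') \<in> classrel T (lam (Bs ! k)) (Bs ! k) 2"
    using assms(2-6) by (simp add: classrel_def)
  then have "lam (Bs ! k) t = lam (Bs ! k) t'"
    using is_LABEL_eq_iff_classrel[OF labeled _ assms(2-5) pos] by simp
  then show ?thesis using assms(4,5) by (simp add: mu_def)
qed

definition carries_theta :: "nat \<Rightarrow> nat set \<Rightarrow> bool" where
  "carries_theta L X \<longleftrightarrow> (\<exists>k t. k < length Bs \<and> t \<in> Bs ! k \<and> cdim t = 2 \<and>
     0 < mu Bs lam m k t \<and> mu Bs lam m k t = L \<and> vox_theta t = X)"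

lemma carries_theta_unique: "carries_theta L X \<Longrightarrow> carries_theta L Y \<Longrightarrow> X = Y"
  unfolding carries_theta_def using mu_eq_imp_vox_theta_eq by metis

lemma unite_pairs_carry_common_theta:
  "(L, L') \<in> unite_pairs Bs lam m 2 \<Longrightarrow> \<exists>X. carries_theta L X \<and> carries_theta L' X"
  unfolding unite_pairs_def carries_theta_def by blast

lemma carries_theta_mu:
  "k < length Bs \<Longrightarrow> t \<in> Bs ! k \<Longrightarrow> cdim t = 2 \<Longrightarrow> 0 < mu Bs lam m k t \<Longrightarrow>
    carries_theta (mu Bs lam m k t) (vox_theta t)"
  unfolding carries_theta_def by blast

lemma rep_carries_theta:
  assumes "is_rep Bs lam m 2 r" "carries_theta L X"
  shows "carries_theta (r L) X"
proof -
  have "(L, r L) \<in> (unite_pairs Bs lam m 2)\<^sup>*"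
    using assms(1) unfolding is_rep_def by blast
  then show ?thesis
    using assms(2) unite_pairs_carry_common_theta carries_theta_unique by (rule rtrancl_preserves_key)
qed

lemma rep_zero:
  assumes "is_rep Bs lam m 2 r"
  shows "r 0 = 0"
proof -
  have "0 \<notin> Domain (unite_pairs Bs lam m 2)"
    unfolding unite_pairs_def by auto
  then show ?thesis
    using assms Not_Domain_rtrancl unfolding is_rep_def by metis
qed

lemma rep_pos_iff:
  assumes "is_rep Bs lam m 2 r" "k < length Bs" "t \<in> Bs ! k" "cdim t = 2"
  shows "0 < r (mu Bs lam m k t) \<longleftrightarrow> 0 < mu Bs lam m k t"
proof
  assume "0 < r (mu Bs lam m k t)"
  then show "0 < mu Bs lam m k t" using rep_zero[OF assms(1)] by (metis gr0I)
next
  assume "0 < mu Bs lam m k t"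
  then have "carries_theta (r (mu Bs lam m k t)) (vox_theta t)"
    using rep_carries_theta[OF assms(1) carries_theta_mu] assms(2-4) by blast
  then show "0 < r (mu Bs lam m k t)" unfolding carries_theta_def by auto
qed

theorem mu_distinct_iff_rep_distinct:
  assumes rep: "is_rep Bs lam m 2 r"
    and "k < length Bs" "t1 \<in> Bs ! k" "cdim t1 = 1" "t \<in> Gam T t1" "t' \<in> Gam T t1"
  shows "mu Bs lam m k t \<noteq> mu Bs lam m k t' \<longleftrightarrow> r (mu Bs lam m k t) \<noteq> r (mu Bs lam m k t')"
proof
  assume distinct: "mu Bs lam m k t \<noteq> mu Bs lam m k t'"
  have in_block: "t \<in> Bs ! k" "t' \<in> Bs ! k" and dim: "cdim t = 2" "cdim t' = 2"
    using blocks_closed_Gam[OF assms(2,3)] assms(4-6) by (auto simp: Gam_def)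
  show "r (mu Bs lam m k t) \<noteq> r (mu Bs lam m k t')"
  proof
    assume same_rep: "r (mu Bs lam m k t) = r (mu Bs lam m k t')"
    have "0 < mu Bs lam m k t \<or> 0 < mu Bs lam m k t'"
      using distinct by auto
    then have pos: "0 < mu Bs lam m k t" "0 < mu Bs lam m k t'"
      using same_rep rep_pos_iff[OF rep assms(2) in_block(1) dim(1)]
        rep_pos_iff[OF rep assms(2) in_block(2) dim(2)] by auto
    have "carries_theta (r (mu Bs lam m k t)) (vox_theta t)"
      "carries_theta (r (mu Bs lam m k t')) (vox_theta t')"
      using rep_carries_theta[OF rep carries_theta_mu] assms(2) in_block dim pos by blast+
    then have "vox_theta t = vox_theta t'"
      using same_rep carries_theta_unique by metis
    moreover have "conn T t t'"
      using blocks_in_grid[OF assms(2)] assms(3,5,6) by (auto simp: conn_def)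
    ultimately show False
      using conn_vox_theta_eq_imp_mu_eq[OF assms(2) in_block dim _ pos] distinct by blast
  qed
qed auto

end

theorem proposition3:
  fixes n1 n2 n3 :: nat
    and \<sigma> :: "cell \<Rightarrow> nat"
    and a1 a2 a3 :: "int list"
    and Bs :: "cell set list"
    and lam :: "cell set \<Rightarrow> cell \<Rightarrow> nat"
    and m :: "cell set \<Rightarrow> nat \<Rightarrow> nat"
    and rep :: "nat \<Rightarrow> nat \<Rightarrow> nat"
    and \<tau>' :: "cell \<Rightarrow> nat"
  assumes n_pos: "n1 \<ge> 1" "n2 \<ge> 1" "n3 \<ge> 1"
    and seg: "seg_label_map n1 n2 n3 \<sigma>"
    and cuts: "valid_cuts n1 a1" "valid_cuts n2 a2" "valid_cuts n3 a3"
    and order: "distinct Bs" "set Bs = blocks a1 a2 a3"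
    and step1: "\<forall>B\<in>set Bs. is_LABEL (tgrid n1 n2 n3) \<sigma> B (lam B) (m B)"
    and step3: "\<forall>j\<in>{1,2}. is_rep Bs lam m j (rep j)"
    and out: "\<forall>k<length Bs. \<forall>t\<in>Bs ! k. cdim t = 2 \<longrightarrow> \<tau>' t = rep 2 (mu Bs lam m k t)"
  shows "\<forall>k<length Bs. \<forall>t1\<in>Bs ! k. cdim t1 = 1 \<longrightarrow>
           (\<forall>t2\<in>Gam (tgrid n1 n2 n3) t1.
              (\<forall>s\<in>Gam (tgrid n1 n2 n3) t1 - {t2}. mu Bs lam m k t2 \<noteq> mu Bs lam m k s)
              \<longleftrightarrow> (\<forall>s\<in>Gam (tgrid n1 n2 n3) t1 - {t2}. \<tau>' t2 \<noteq> \<tau>' s))"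
proof -
  interpret block_labeling "tgrid n1 n2 n3" \<sigma> Bs lam m
  proof
    fix k assume "k < length Bs"
    then have block: "Bs ! k \<in> blocks a1 a2 a3" using order(2) nth_mem by blast
    show "Bs ! k \<subseteq> tgrid n1 n2 n3" using block_subset_tgrid[OF cuts block] .
    show "Gam (tgrid n1 n2 n3) t \<subseteq> Bs ! k" if "t \<in> Bs ! k" for t
      using Gam_subset_of_block[OF cuts block that] .
    show "is_LABEL (tgrid n1 n2 n3) \<sigma> (Bs ! k) (lam (Bs ! k)) (m (Bs ! k))"
      using step1 \<open>k < length Bs\<close> by simp
  qed
  have rep: "is_rep Bs lam m 2 (rep 2)" using step3 by simp
  show ?thesis
  proof (intro allI impI ballI)
    fix k t1 t2
    assume k: "k < length Bs" and t1: "t1 \<in> Bs ! k" "cdim t1 = 1"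
      and t2: "t2 \<in> Gam (tgrid n1 n2 n3) t1"
    have \<tau>': "\<tau>' s = rep 2 (mu Bs lam m k s)" if "s \<in> Gam (tgrid n1 n2 n3) t1" for s
      using out k blocks_closed_Gam[OF k t1(1)] that t1(2) by (auto simp: Gam_def)
    show "(\<forall>s\<in>Gam (tgrid n1 n2 n3) t1 - {t2}. mu Bs lam m k t2 \<noteq> mu Bs lam m k s)
      \<longleftrightarrow> (\<forall>s\<in>Gam (tgrid n1 n2 n3) t1 - {t2}. \<tau>' t2 \<noteq> \<tau>' s)"
    proof (rule ball_cong[OF refl])
      fix s assume "s \<in> Gam (tgrid n1 n2 n3) t1 - {t2}"
      then show "mu Bs lam m k t2 \<noteq> mu Bs lam m k s \<longleftrightarrow> \<tau>' t2 \<noteq> \<tau>' s"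
        using mu_distinct_iff_rep_distinct[OF rep k t1 t2] \<tau>' t2 by simp
    qed
  qed
qed

end
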